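(* Let $k\ge1$, $G=(V,E)$ an inductively $k$-independent graph with $k$-independence ordering $v_1,\dots,v_n$, $f:2^V\to\mathbb{R}_{\ge0}$ monotone submodular with $f(\emptyset)=0$, and $\beta>0$. Run algorithm PREEMPTIVE-GREEDY (described in the context), let $S_{\mathrm{out}}$ be its output and $U$ the set of all vertices that were ever contained in $S$ during the run. Then $f(U)\le(1+\beta^{-1})f(S_{\mathrm{out}})$.
   Context: $N(v)$ is the neighbourhood of $v$ (excluding $v$); $G$ is inductively $k$-independent with $k$-independence ordering $v_1,\dots,v_n$ if for every $i$, $G[N(v_i)\cap\{v_i,\dots,v_n\}]$ has no independent set of size more than $k$. Order $V$ by $v_1<\dots<v_n$. For $S\subseteq V$: $f_S(v)=f(S\cup\{v\})-f(S)$, and $\nu_f(S,u)=f_{S'}(u)$ where $S'=\{s\in S:s<u\}$. Algorithm PREEMPTIVE-GREEDY (parameter $\beta>0$): start with $S=\emptyset$; for $i=1,\dots,n$: let $C_i=N(v_i)\cap S$; if $f_S(v_i)\ge(1+\beta)\sum_{u\in C_i}\nu_f(S,u)$, replace $S$ by $(S\setminus C_i)\cup\{v_i\}$. Return the final $S$ as $S_{\mathrm{out}}$. *)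

theory Defs
  imports "HOL-Analysis.Analysis"
begin

definition simple_graph :: "'a set \<Rightarrow> ('a \<Rightarrow> 'a \<Rightarrow> bool) \<Rightarrow> bool" where
  "simple_graph V E \<longleftrightarrow> finite V \<and> (\<forall>u v. E u v \<longrightarrow> u \<in> V \<and> v \<in> V)
     \<and> (\<forall>u v. E u v \<longrightarrow> E v u) \<and> (\<forall>v. \<not> E v v)"

definition nbhd :: "'a set \<Rightarrow> ('a \<Rightarrow> 'a \<Rightarrow> bool) \<Rightarrow> 'a \<Rightarrow> 'a set" where
  "nbhd V E v = {u \<in> V. E v u}"

definition independent_set :: "('a \<Rightarrow> 'a \<Rightarrow> bool) \<Rightarrow> 'a set \<Rightarrow> bool" where
  "independent_set E I \<longleftrightarrow> (\<forall>x\<in>I. \<forall>y\<in>I. \<not> E x y)"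

definition k_independence_ordering ::
    "nat \<Rightarrow> 'a set \<Rightarrow> ('a \<Rightarrow> 'a \<Rightarrow> bool) \<Rightarrow> 'a list \<Rightarrow> bool" where
  "k_independence_ordering k V E vs \<longleftrightarrow> distinct vs \<and> set vs = V \<and>
     (\<forall>i < length vs. \<forall>I. I \<subseteq> nbhd V E (vs ! i) \<inter> set (drop i vs) \<and> independent_set E I
          \<longrightarrow> card I \<le> k)"

definition before :: "'a list \<Rightarrow> 'a \<Rightarrow> 'a \<Rightarrow> bool" where
  "before vs u w \<longleftrightarrow> (\<exists>i j. i < j \<and> j < length vs \<and> vs ! i = u \<and> vs ! j = w)"

definition monotone_setfun :: "'a set \<Rightarrow> ('a set \<Rightarrow> real) \<Rightarrow> bool" where
  "monotone_setfun V f \<longleftrightarrow> (\<forall>A B. A \<subseteq> B \<and> B \<subseteq> V \<longrightarrow> f A \<le> f B)"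

definition submodular_setfun :: "'a set \<Rightarrow> ('a set \<Rightarrow> real) \<Rightarrow> bool" where
  "submodular_setfun V f \<longleftrightarrow>
     (\<forall>A B. A \<subseteq> V \<and> B \<subseteq> V \<longrightarrow> f (A \<union> B) + f (A \<inter> B) \<le> f A + f B)"

definition marg :: "('a set \<Rightarrow> real) \<Rightarrow> 'a set \<Rightarrow> 'a \<Rightarrow> real" where
  "marg f S v = f (S \<union> {v}) - f S"

definition nu :: "'a list \<Rightarrow> ('a set \<Rightarrow> real) \<Rightarrow> 'a set \<Rightarrow> 'a \<Rightarrow> real" where
  "nu vs f S u = marg f {s \<in> S. before vs s u} u"

definition pg_step ::
    "'a list \<Rightarrow> 'a set \<Rightarrow> ('a \<Rightarrow> 'a \<Rightarrow> bool) \<Rightarrow> ('a set \<Rightarrow> real) \<Rightarrow> real \<Rightarrow> 'a set \<Rightarrow> 'a \<Rightarrow> 'a set" where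
  "pg_step vs V E f \<beta> S v =
     (let C = nbhd V E v \<inter> S in
      if marg f S v \<ge> (1 + \<beta>) * (\<Sum>u\<in>C. nu vs f S u) then (S - C) \<union> {v} else S)"

definition pg_state ::
    "'a list \<Rightarrow> 'a set \<Rightarrow> ('a \<Rightarrow> 'a \<Rightarrow> bool) \<Rightarrow> ('a set \<Rightarrow> real) \<Rightarrow> real \<Rightarrow> nat \<Rightarrow> 'a set" where
  "pg_state vs V E f \<beta> i = foldl (pg_step vs V E f \<beta>) {} (take i vs)"

definition pg_out ::
    "'a list \<Rightarrow> 'a set \<Rightarrow> ('a \<Rightarrow> 'a \<Rightarrow> bool) \<Rightarrow> ('a set \<Rightarrow> real) \<Rightarrow> real \<Rightarrow> 'a set" where
  "pg_out vs V E f \<beta> = pg_state vs V E f \<beta> (length vs)"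

definition pg_ever ::
    "'a list \<Rightarrow> 'a set \<Rightarrow> ('a \<Rightarrow> 'a \<Rightarrow> bool) \<Rightarrow> ('a set \<Rightarrow> real) \<Rightarrow> real \<Rightarrow> 'a set" where
  "pg_ever vs V E f \<beta> = (\<Union>i \<le> length vs. pg_state vs V E f \<beta> i)"

end

theory Submission
  imports Defs
begin

text \<open>Charge every vertex \<open>u\<close> that ever enters the solution the weight
  \<open>w(u) = f\<^sub>T(u)\<close>, where \<open>T\<close> is the solution at the time \<open>u\<close> is processed
  minus the neighbours that \<open>u\<close> would evict. While \<open>u\<close> stays in \<open>S\<close>, its
  predecessors in \<open>S\<close> form a subset of \<open>T\<close>, so \<open>w(u) \<le> \<nu>\<^sub>f(S,u)\<close> by
  submodularity, and telescoping gives \<open>w(S\<^sub>o\<^sub>u\<^sub>t) \<le> f(S\<^sub>o\<^sub>u\<^sub>t)\<close>; dually, the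
  predecessors of \<open>u\<close> in \<open>U\<close> contain \<open>T\<close>, so \<open>f(U) \<le> w(U)\<close>. When \<open>v\<close> enters
  and evicts \<open>C\<close>, the acceptance test gives \<open>(1 + \<beta>) w(C) \<le> f\<^sub>S(v) \<le> w(v)\<close>,
  which preserves the invariant \<open>\<beta> w(U) \<le> (1 + \<beta>) w(S)\<close>.\<close>

definition position :: "'a list \<Rightarrow> 'a \<Rightarrow> nat" where
  "position vs u = the_inv_into {..<length vs} ((!) vs) u"

lemma position_nth:
  assumes "distinct vs" "i < length vs"
  shows "position vs (vs ! i) = i"
  unfolding position_def using assms by (simp add: the_inv_into_f_f inj_on_nth)

lemma position_less_length:
  assumes "distinct vs" "u \<in> set vs"
  shows "position vs u < length vs"
  using assms by (auto simp: in_set_conv_nth position_nth)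

lemma nth_position:
  assumes "distinct vs" "u \<in> set vs"
  shows "vs ! position vs u = u"
  using assms by (auto simp: in_set_conv_nth position_nth)

lemma in_set_take_iff_position:
  assumes "distinct vs"
  shows "u \<in> set (take i vs) \<longleftrightarrow> u \<in> set vs \<and> position vs u < i"
proof
  assume "u \<in> set (take i vs)"
  then obtain j where "j < length vs" "j < i" "vs ! j = u" by (auto simp: in_set_conv_nth)
  then show "u \<in> set vs \<and> position vs u < i" using position_nth[OF assms] by auto
next
  assume "u \<in> set vs \<and> position vs u < i"
  then show "u \<in> set (take i vs)"
    using position_less_length[OF assms] nth_position[OF assms]
    by (metis in_set_conv_nth length_take min_less_iff_conj nth_take)
qed

lemma before_iff_position:
  assumes "distinct vs"
  shows "before vs u w \<longleftrightarrow> u \<in> set vs \<and> w \<in> set vs \<and> position vs u < position vs w"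
proof
  assume "before vs u w"
  then obtain i j where "i < j" "j < length vs" "vs ! i = u" "vs ! j = w"
    unfolding before_def by blast
  then show "u \<in> set vs \<and> w \<in> set vs \<and> position vs u < position vs w"
    using position_nth[OF assms] by auto
next
  assume "u \<in> set vs \<and> w \<in> set vs \<and> position vs u < position vs w"
  then show "before vs u w"
    unfolding before_def using position_less_length[OF assms] nth_position[OF assms]
    by (intro exI[of _ "position vs u"] exI[of _ "position vs w"]) auto
qed

lemma not_before_refl:
  assumes "distinct vs"
  shows "\<not> before vs u u"
  using assms by (simp add: before_iff_position)

lemma before_asym:
  assumes "distinct vs" "before vs u w"
  shows "\<not> before vs w u"
  using assms by (simp add: before_iff_position)

lemma marg_antimono:
  assumes "monotone_setfun V f" "submodular_setfun V f" "A \<subseteq> B" "B \<subseteq> V" "x \<in> V"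
  shows "marg f B x \<le> marg f A x"
proof -
  have submod: "f (B \<union> {x}) + f ((A \<union> {x}) \<inter> B) \<le> f (A \<union> {x}) + f B"
  proof -
    have "A \<union> {x} \<subseteq> V" "(A \<union> {x}) \<union> B = B \<union> {x}"
      using assms(3-5) by auto
    then show ?thesis
      using assms(2,4) unfolding submodular_setfun_def by metis
  qed
  have mono: "f A \<le> f ((A \<union> {x}) \<inter> B)"
  proof -
    have "A \<subseteq> (A \<union> {x}) \<inter> B" "(A \<union> {x}) \<inter> B \<subseteq> V"
      using assms(3,4) by auto
    then show ?thesis
      using assms(1) unfolding monotone_setfun_def by blast
  qed
  from submod mono show ?thesis
    unfolding marg_def by linarith
qed

lemma sum_nu_telescope:
  assumes "distinct vs" "S \<subseteq> set vs"
  shows "(\<Sum>u\<in>S. nu vs f S u) = f S - f {}"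
proof -
  have "(\<Sum>u\<in>S. nu vs f S u) = f S - f {}" if "S \<subseteq> set (take n vs)" for n
    using that
  proof (induction n arbitrary: S)
    case 0
    then show ?case by simp
  next
    case (Suc n)
    show ?case
    proof (cases "n < length vs \<and> vs ! n \<in> S")
      case False
      then have "S \<subseteq> set (take n vs)"
        using Suc.prems by (cases "n < length vs") (auto simp: take_Suc_conv_app_nth)
      then show ?thesis by (rule Suc.IH)
    next
      case True
      define v where "v = vs ! n"
      define S' where "S' = S - {v}"
      have S': "S' \<subseteq> set (take n vs)"
        using Suc.prems True unfolding S'_def v_def by (auto simp: take_Suc_conv_app_nth)
      have S_eq: "S = insert v S'" "v \<notin> S'"
        using True unfolding S'_def v_def by auto
      have "finite S'"
        using S' by (rule finite_subset) simp
      have earlier: "before vs s v" if "s \<in> S'" for s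
        using that S' True assms(1) unfolding v_def
        by (force simp: before_iff_position in_set_take_iff_position position_nth)
      have "{s \<in> S. before vs s v} = S'"
        using earlier S_eq not_before_refl[OF assms(1)] by blast
      then have "nu vs f S v = marg f S' v"
        unfolding nu_def by simp
      moreover have "nu vs f S u = nu vs f S' u" if "u \<in> S'" for u
      proof -
        have "\<not> before vs v u"
          using before_asym[OF assms(1) earlier[OF that]] .
        then show ?thesis unfolding nu_def S_eq(1) by (metis insert_iff)
      qed
      ultimately have "(\<Sum>u\<in>S. nu vs f S u) = marg f S' v + (\<Sum>u\<in>S'. nu vs f S' u)"
        using S_eq \<open>finite S'\<close> by simp
      also have "\<dots> = f S - f {}"
        using Suc.IH[OF S'] S_eq(1) unfolding marg_def by simp
      finally show ?thesis .
    qed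
  qed
  from this[of "length vs"] show ?thesis using assms(2) by simp
qed

locale preemptive_greedy =
  fixes vs :: "'a list" and V :: "'a set" and E :: "'a \<Rightarrow> 'a \<Rightarrow> bool"
    and f :: "'a set \<Rightarrow> real" and \<beta> :: real
  assumes distinct_vs: "distinct vs"
    and set_vs: "set vs = V"
    and monotone: "monotone_setfun V f"
    and submodular: "submodular_setfun V f"
begin

abbreviation state :: "nat \<Rightarrow> 'a set" where
  "state \<equiv> pg_state vs V E f \<beta>"

definition visited :: "nat \<Rightarrow> 'a set" where
  "visited i = (\<Union>j\<le>i. state j)"

definition weight :: "'a \<Rightarrow> real" where
  "weight u = marg f (state (position vs u) - nbhd V E u) u"

lemma state_0: "state 0 = {}"
  by (simp add: pg_state_def)

lemma state_Suc_cases: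
  obtains (keep) "state (Suc i) = state i"
  | (swap) "i < length vs" "state (Suc i) = insert (vs ! i) (state i - nbhd V E (vs ! i))"
      "(1 + \<beta>) * (\<Sum>u \<in> nbhd V E (vs ! i) \<inter> state i. nu vs f (state i) u)
         \<le> marg f (state i) (vs ! i)"
proof (cases "i < length vs")
  case True
  then have "state (Suc i) = pg_step vs V E f \<beta> (state i) (vs ! i)"
    by (simp add: pg_state_def take_Suc_conv_app_nth)
  moreover have "(state i - nbhd V E (vs ! i) \<inter> state i) \<union> {vs ! i}
      = insert (vs ! i) (state i - nbhd V E (vs ! i))"
    by blast
  ultimately show ?thesis
    using keep swap True unfolding pg_step_def Let_def by (auto split: if_splits)
next
  case False
  then show ?thesis
    using keep by (simp add: pg_state_def)
qed

lemma state_subset_take: "state i \<subseteq> set (take i vs)"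
proof (induction i)
  case 0
  show ?case by (simp add: state_0)
next
  case (Suc i)
  have "set (take i vs) \<subseteq> set (take (Suc i) vs)"
    by (rule set_take_subset_set_take) simp
  then show ?case
    using Suc.IH by (cases i rule: state_Suc_cases) (auto simp: take_Suc_conv_app_nth)
qed

lemma state_subset: "state i \<subseteq> V"
  using state_subset_take set_vs by (metis set_take_subset subset_trans)

lemma finite_state: "finite (state i)"
  using state_subset_take by (rule finite_subset) simp

lemma mem_state_position_less: "u \<in> state i \<Longrightarrow> position vs u < i"
  using state_subset_take in_set_take_iff_position[OF distinct_vs] by blast

lemma state_predecessors_subset:
  "u \<in> state i \<Longrightarrow> {s \<in> state i. before vs s u} \<subseteq> state (position vs u) - nbhd V E u"
proof (induction i arbitrary: u)
  case 0
  then show ?case by (simp add: state_0)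
next
  case (Suc i)
  show ?case
  proof (cases i rule: state_Suc_cases)
    case keep
    then show ?thesis using Suc by simp
  next
    case swap
    show ?thesis
    proof (cases "u = vs ! i")
      case True
      then show ?thesis
        using swap not_before_refl[OF distinct_vs] position_nth[OF distinct_vs] by auto
    next
      case False
      then have "u \<in> state i"
        using Suc.prems swap(2) by blast
      then have "\<not> before vs (vs ! i) u"
        using mem_state_position_less[OF \<open>u \<in> state i\<close>] position_nth[OF distinct_vs swap(1)]
        by (auto simp: before_iff_position[OF distinct_vs])
      then show ?thesis
        using Suc.IH[OF \<open>u \<in> state i\<close>] swap(2) by auto
    qed
  qed
qed

lemma weight_le_nu: "u \<in> state i \<Longrightarrow> weight u \<le> nu vs f (state i) u"
  unfolding weight_def nu_def
  using marg_antimono[OF monotone submodular state_predecessors_subset] state_subset by blast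

lemma visited_Suc: "visited (Suc i) = visited i \<union> state (Suc i)"
  unfolding visited_def by (auto simp: atMost_Suc)

lemma state_subset_visited: "state i \<subseteq> visited i"
  unfolding visited_def by auto

lemma visited_subset_take: "visited i \<subseteq> set (take i vs)"
  unfolding visited_def
proof (rule UN_least)
  fix j assume "j \<in> {..i}"
  then show "state j \<subseteq> set (take i vs)"
    using state_subset_take[of j] set_take_subset_set_take[of j i vs] by auto
qed

lemma finite_visited: "finite (visited i)"
  using visited_subset_take by (rule finite_subset) simp

lemma sum_weight_visited_le:
  assumes "0 \<le> \<beta>"
  shows "\<beta> * (\<Sum>u\<in>visited i. weight u) \<le> (1 + \<beta>) * (\<Sum>u\<in>state i. weight u)"
proof (induction i)
  case 0
  then show ?case by (simp add: visited_def state_0)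
next
  case (Suc i)
  show ?case
  proof (cases i rule: state_Suc_cases)
    case keep
    then show ?thesis
      using Suc.IH state_subset_visited[of i] by (simp add: visited_Suc Un_absorb2)
  next
    case swap
    define v where "v = vs ! i"
    define C where "C = nbhd V E v \<inter> state i"
    have "v \<notin> visited i"
      using visited_subset_take[of i] position_nth[OF distinct_vs swap(1)]
      unfolding v_def by (auto simp: in_set_take_iff_position[OF distinct_vs])
    then have "v \<notin> state i"
      using state_subset_visited by blast
    have "visited (Suc i) = insert v (visited i)"
      using swap(2) state_subset_visited[of i] unfolding visited_Suc v_def by blast
    then have visited:
        "(\<Sum>u\<in>visited (Suc i). weight u) = weight v + (\<Sum>u\<in>visited i. weight u)"
      using \<open>v \<notin> visited i\<close> finite_visited by simp
    have "state (Suc i) = insert v (state i - C)"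
      using swap(2) unfolding C_def v_def by blast
    then have state: "(\<Sum>u\<in>state (Suc i). weight u)
        = weight v + (\<Sum>u\<in>state i. weight u) - (\<Sum>u\<in>C. weight u)"
      using \<open>v \<notin> state i\<close> finite_state unfolding C_def by (simp add: sum_diff)
    have "(1 + \<beta>) * (\<Sum>u\<in>C. weight u) \<le> (1 + \<beta>) * (\<Sum>u\<in>C. nu vs f (state i) u)"
      using assms weight_le_nu unfolding C_def by (intro mult_left_mono sum_mono) auto
    also have "\<dots> \<le> marg f (state i) v"
      using swap(3) unfolding C_def v_def .
    also have "\<dots> \<le> weight v"
      unfolding weight_def v_def position_nth[OF distinct_vs swap(1)]
      using marg_antimono[OF monotone submodular _ state_subset] set_vs swap(1) by auto
    finally have charge: "(1 + \<beta>) * (\<Sum>u\<in>C. weight u) \<le> weight v" .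
    have "(1 + \<beta>) * (\<Sum>u\<in>state (Suc i). weight u)
        = \<beta> * weight v + (1 + \<beta>) * (\<Sum>u\<in>state i. weight u)
          + (weight v - (1 + \<beta>) * (\<Sum>u\<in>C. weight u))"
      unfolding state by (simp add: algebra_simps)
    moreover have "\<beta> * (\<Sum>u\<in>visited (Suc i). weight u)
        = \<beta> * weight v + \<beta> * (\<Sum>u\<in>visited i. weight u)"
      unfolding visited by (simp add: algebra_simps)
    ultimately show ?thesis
      using Suc.IH charge by linarith
  qed
qed

lemma f_visited_le_sum_weight: "f (visited i) - f {} \<le> (\<Sum>u\<in>visited i. weight u)"
proof -
  have visited_vs: "visited i \<subseteq> set vs"
    using visited_subset_take set_take_subset by fast
  have "f (visited i) - f {} = (\<Sum>u\<in>visited i. nu vs f (visited i) u)"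
    using sum_nu_telescope[OF distinct_vs visited_vs] by simp
  also have "\<dots> \<le> (\<Sum>u\<in>visited i. weight u)"
  proof (rule sum_mono)
    fix u assume "u \<in> visited i"
    then have "u \<in> set vs" "position vs u < i"
      using visited_subset_take in_set_take_iff_position[OF distinct_vs] by blast+
    then have "state (position vs u) - nbhd V E u \<subseteq> {s \<in> visited i. before vs s u}"
      using mem_state_position_less state_subset_take set_take_subset
      unfolding visited_def
      by (fastforce simp: before_iff_position[OF distinct_vs])
    moreover have "{s \<in> visited i. before vs s u} \<subseteq> V"
      using visited_vs set_vs by blast
    ultimately show "nu vs f (visited i) u \<le> weight u"
      unfolding nu_def weight_def
      using marg_antimono[OF monotone submodular] \<open>u \<in> set vs\<close> set_vs by blast
  qed
  finally show ?thesis .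
qed

lemma sum_weight_state_le_f: "(\<Sum>u\<in>state i. weight u) \<le> f (state i) - f {}"
proof -
  have "(\<Sum>u\<in>state i. weight u) \<le> (\<Sum>u\<in>state i. nu vs f (state i) u)"
    using weight_le_nu by (rule sum_mono)
  also have "\<dots> = f (state i) - f {}"
    using state_subset_take set_take_subset by (intro sum_nu_telescope[OF distinct_vs]) fast
  finally show ?thesis .
qed

theorem f_visited_le_f_state:
  assumes "\<beta> > 0"
  shows "f (visited i) - f {} \<le> (1 + 1 / \<beta>) * (f (state i) - f {})"
proof -
  have "f (visited i) - f {} \<le> (\<Sum>u\<in>visited i. weight u)"
    by (rule f_visited_le_sum_weight)
  also have "\<dots> \<le> (1 + 1 / \<beta>) * (\<Sum>u\<in>state i. weight u)"
    using sum_weight_visited_le[of i] assms by (simp add: field_simps)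
  also have "\<dots> \<le> (1 + 1 / \<beta>) * (f (state i) - f {})"
    using sum_weight_state_le_f assms by (intro mult_left_mono) auto
  finally show ?thesis .
qed

end

theorem lemma14:
  fixes k :: nat and V :: "'a set" and E :: "'a \<Rightarrow> 'a \<Rightarrow> bool" and vs :: "'a list"
    and f :: "'a set \<Rightarrow> real" and \<beta> :: real
  assumes "k \<ge> 1"
    and "simple_graph V E"
    and "k_independence_ordering k V E vs"
    and "\<forall>A. A \<subseteq> V \<longrightarrow> f A \<ge> 0"
    and "monotone_setfun V f"
    and "submodular_setfun V f"
    and "f {} = 0"
    and "\<beta> > 0"
  shows "f (pg_ever vs V E f \<beta>) \<le> (1 + 1 / \<beta>) * f (pg_out vs V E f \<beta>)"
proof -
  interpret preemptive_greedy vs V E f \<beta>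
    using assms(3,5,6) by unfold_locales (auto simp: k_independence_ordering_def)
  have "pg_ever vs V E f \<beta> = visited (length vs)" "pg_out vs V E f \<beta> = state (length vs)"
    unfolding pg_ever_def pg_out_def visited_def by simp_all
  then show ?thesis
    using f_visited_le_f_state[OF assms(8), of "length vs"] assms(7) by simp
qed

end
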